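(* Let $m,n$ be positive integers and $p$ an odd prime not dividing $m$. For $r\in\mathbb Z$ define $K_p(r,m)=\sum_{1\le k\le p-1,\ m\mid k-rp}\frac1k$. Then $$B_{p-1}\Big(\Big\{\frac{pn}m\Big\}\Big)-B_{p-1}\equiv m\sum_{r=1}^nK_p(r,m)\equiv-\sum_{\substack{1\le k\le\lfloor pn/m\rfloor\\ p\nmid k}}\frac1k\pmod p,$$ and moreover $K_p(r,m)\equiv-K_p(1-r,m)\pmod p$ for every $r\in\mathbb Z$.
   Context: $\{x\}$ denotes the fractional part and $\lfloor x\rfloor$ the integer part of $x$; $B_n(x)$ is the $n$th Bernoulli polynomial and $B_n=B_n(0)$. Congruences modulo $p$ are between rational numbers whose denominators are prime to $p$. *)

theory Defs
  imports Complex_Main "HOL-Computational_Algebra.Primes"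
begin

text \<open>Bernoulli numbers with the convention B_1 = -1/2 (so that B_n = B_n(0)):
  B_0 = 1 and sum_{k=0}^{n} C(n+1,k) B_k = 0 for n >= 1.\<close>
fun bernoulli_num :: "nat \<Rightarrow> rat" where
  "bernoulli_num n =
     (if n = 0 then 1
      else - (\<Sum>k<n. of_nat ((n + 1) choose k) * (if k < n then bernoulli_num k else 0))
             / of_nat (n + 1))"

definition bernoulli_poly :: "nat \<Rightarrow> rat \<Rightarrow> rat" where
  "bernoulli_poly n x = (\<Sum>k\<le>n. of_nat (n choose k) * bernoulli_num k * x ^ (n - k))"

definition p_integral :: "nat \<Rightarrow> rat \<Rightarrow> bool" where
  "p_integral p x \<longleftrightarrow> coprime (snd (quotient_of x)) (int p)"

definition rat_cong :: "rat \<Rightarrow> rat \<Rightarrow> nat \<Rightarrow> bool" where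
  "rat_cong a b p \<longleftrightarrow> p_integral p a \<and> p_integral p b \<and>
      int p dvd fst (quotient_of (a - b))"

definition K :: "nat \<Rightarrow> int \<Rightarrow> nat \<Rightarrow> rat" where
  "K p r m = (\<Sum>k\<in>{k\<in>{1..p-1}. int m dvd int k - r * int p}. 1 / of_nat k)"

end

(* Write N = floor (p n / m), so that frac (p n / m) = p n / m - N is congruent to -N mod p.
   As B_(p-1)(X) - B_(p-1) has p-integral coefficients, the first quantity is congruent to
   B_(p-1)(-N) - B_(p-1) = (p - 1) * sum_(i<=N) i^(p-2), and by Fermat i^(p-2) is congruent to
   1/i or 0; this gives minus the harmonic sum over 1 <= j <= N with p not dividing j.
   The pairs (r, k) occurring in sum_(r<=n) K_p(r, m) correspond bijectively to these j via
   r p - k = m j, and m/k + 1/j = r p/(k j) is congruent to 0.  The reflection k -> p - k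
   gives K_p(1 - r, m), and 1/k + 1/(p - k) = p/(k (p - k)). *)

theory Submission
  imports Defs "HOL-Number_Theory.Number_Theory"
begin

lemma quotient_of_cross_eq:
  assumes "quotient_of x = (u, v)" and "x = of_int a / of_int b" and "b \<noteq> 0"
  shows "u * b = a * v"
proof -
  have "v > 0" using assms(1) by (rule quotient_of_denom_pos)
  have "(of_int a / of_int b :: rat) = of_int u / of_int v"
    using assms(1,2) quotient_of_div by blast
  then have "rat_of_int (u * b) = of_int (a * v)"
    using \<open>b \<noteq> 0\<close> \<open>v > 0\<close> by (simp add: frac_eq_eq)
  then show ?thesis by (simp only: of_int_eq_iff)
qed

lemma p_integralI:
  assumes "b > 0" and b: "coprime b (int p)" and x: "x = of_int a / of_int b"
  shows "p_integral p x"
proof -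
  obtain u v where q: "quotient_of x = (u, v)" by fastforce
  have "u * b = a * v" using quotient_of_cross_eq[OF q x] \<open>b > 0\<close> by simp
  then have "v dvd u * b" by simp
  moreover have "coprime v u" using quotient_of_coprime[OF q] by (rule coprime_commute[THEN iffD1])
  ultimately have "v dvd b" using coprime_dvd_mult_right_iff by blast
  then have "coprime v (int p)" using dvd_refl b by (rule coprime_divisors)
  then show "p_integral p x" by (simp add: p_integral_def q)
qed

lemma p_integralE:
  assumes "p_integral p x"
  obtains a b where "b > 0" "coprime b (int p)" "x = of_int a / of_int b"
proof -
  obtain a b where q: "quotient_of x = (a, b)" by fastforce
  show thesis
  proof (rule that)
    show "b > 0" using q by (rule quotient_of_denom_pos)
    show "coprime b (int p)" using assms by (simp add: p_integral_def q)
    show "x = of_int a / of_int b" using q by (rule quotient_of_div)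
  qed
qed

lemma p_integral_of_int [simp]: "p_integral p (of_int a)"
  by (simp add: p_integral_def)

lemma p_integral_of_nat [simp]: "p_integral p (of_nat a)"
  by (simp add: p_integral_def)

lemma p_integral_0 [simp]: "p_integral p 0"
  and p_integral_1 [simp]: "p_integral p 1"
  using p_integral_of_nat[of p 0] p_integral_of_nat[of p 1] by simp_all

lemma p_integral_add:
  assumes "p_integral p x" and "p_integral p y"
  shows "p_integral p (x + y)"
proof -
  obtain a b where "b > 0" "coprime b (int p)" "x = of_int a / of_int b"
    using assms(1) by (rule p_integralE)
  moreover obtain c d where "d > 0" "coprime d (int p)" "y = of_int c / of_int d"
    using assms(2) by (rule p_integralE)
  ultimately show ?thesis
    by (intro p_integralI[of "b * d" p _ "a * d + c * b"]) (simp_all add: field_simps)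
qed

lemma p_integral_mult:
  assumes "p_integral p x" and "p_integral p y"
  shows "p_integral p (x * y)"
proof -
  obtain a b where "b > 0" "coprime b (int p)" "x = of_int a / of_int b"
    using assms(1) by (rule p_integralE)
  moreover obtain c d where "d > 0" "coprime d (int p)" "y = of_int c / of_int d"
    using assms(2) by (rule p_integralE)
  ultimately show ?thesis by (intro p_integralI[of "b * d" p _ "a * c"]) simp_all
qed

lemma p_integral_minus: "p_integral p x \<Longrightarrow> p_integral p (- x)"
  using p_integral_mult[OF p_integral_of_int[of p "-1"]] by simp

lemma p_integral_diff: "p_integral p x \<Longrightarrow> p_integral p y \<Longrightarrow> p_integral p (x - y)"
  using p_integral_add[of p x "- y"] p_integral_minus[of p y] by simp

lemma p_integral_sum: "(\<And>i. i \<in> A \<Longrightarrow> p_integral p (f i)) \<Longrightarrow> p_integral p (sum f A)"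
  by (induction A rule: infinite_finite_induct) (auto intro: p_integral_add)

lemma p_integral_power: "p_integral p x \<Longrightarrow> p_integral p (x ^ n)"
  by (induction n) (auto intro: p_integral_mult)

lemma p_integral_inverse_of_nat:
  assumes "prime p" and "\<not> p dvd k"
  shows "p_integral p (1 / of_nat k)"
proof (rule p_integralI[of "int k" p _ 1])
  show "int k > 0" using assms(2) by (cases "k = 0") simp_all
  show "coprime (int k) (int p)"
    using coprime_commute[THEN iffD1, OF prime_imp_coprime[OF assms]] by simp
qed simp

lemma p_integral_divide_of_nat:
  assumes "prime p" and "\<not> p dvd k" and "p_integral p x"
  shows "p_integral p (x / of_nat k)"
  using p_integral_mult[OF assms(3) p_integral_inverse_of_nat[OF assms(1,2)]] by simp

lemma p_dvd_numerator_iff: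
  assumes "p_integral p x"
  shows "int p dvd fst (quotient_of x) \<longleftrightarrow> (\<exists>c. p_integral p c \<and> x = of_nat p * c)"
proof -
  obtain u v where q: "quotient_of x = (u, v)" by fastforce
  show ?thesis
  proof
    assume "int p dvd fst (quotient_of x)"
    then obtain w where "u = int p * w" using q by (auto elim: dvdE)
    then have "x = of_nat p * (of_int w / of_int v)" using quotient_of_div[OF q] by simp
    moreover have "p_integral p (of_int w / of_int v)"
    proof (rule p_integralI[where a=w])
      show "v > 0" using q by (rule quotient_of_denom_pos)
      show "coprime v (int p)" using assms by (simp add: p_integral_def q)
    qed simp
    ultimately show "\<exists>c. p_integral p c \<and> x = of_nat p * c" by blast
  next
    assume "\<exists>c. p_integral p c \<and> x = of_nat p * c"
    then obtain c where "p_integral p c" and xc: "x = of_nat p * c" by blast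
    then obtain s t where "t > 0" and t: "coprime t (int p)" and "c = of_int s / of_int t"
      by (auto elim: p_integralE)
    then have "x = of_int (int p * s) / of_int t" using xc by simp
    then have "u * t = int p * s * v" using quotient_of_cross_eq[OF q] \<open>t > 0\<close> by simp
    then have "int p dvd u * t" by (metis dvd_triv_left mult.assoc)
    moreover have "coprime (int p) t" using t by (rule coprime_commute[THEN iffD1])
    ultimately have "int p dvd u" using coprime_dvd_mult_left_iff by blast
    then show "int p dvd fst (quotient_of x)" using q by simp
  qed
qed

lemma rat_congI:
  assumes "p_integral p a" and "p_integral p b" and "p_integral p c" and "a - b = of_nat p * c"
  shows "rat_cong a b p"
  unfolding rat_cong_def
  using assms p_dvd_numerator_iff[OF p_integral_diff[OF assms(1,2)]] by blast

lemma rat_congE: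
  assumes "rat_cong a b p"
  obtains c where "p_integral p a" "p_integral p b" "p_integral p c" "a - b = of_nat p * c"
  using assms p_dvd_numerator_iff[of p "a - b"] p_integral_diff[of p a b]
  unfolding rat_cong_def by blast

lemma rat_cong_refl: "p_integral p a \<Longrightarrow> rat_cong a a p"
  by (rule rat_congI[where c=0]) simp_all

lemma rat_cong_sym:
  assumes "rat_cong a b p"
  shows "rat_cong b a p"
proof -
  obtain c where "p_integral p a" "p_integral p b" "p_integral p c" "a - b = of_nat p * c"
    using assms by (rule rat_congE)
  then show ?thesis by (intro rat_congI[where c="- c"]) (simp_all add: p_integral_minus)
qed

lemma rat_cong_trans:
  assumes "rat_cong a b p" and "rat_cong b c p"
  shows "rat_cong a c p"
proof -
  obtain d where "p_integral p a" "p_integral p d" "a - b = of_nat p * d"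
    using assms(1) by (rule rat_congE)
  moreover obtain e where "p_integral p c" "p_integral p e" "b - c = of_nat p * e"
    using assms(2) by (rule rat_congE)
  ultimately show ?thesis
    by (intro rat_congI[where c="d + e"] p_integral_add) (simp_all add: algebra_simps)
qed

lemma rat_cong_add:
  assumes "rat_cong a b p" and "rat_cong c d p"
  shows "rat_cong (a + c) (b + d) p"
proof -
  obtain e where "p_integral p a" "p_integral p b" "p_integral p e" "a - b = of_nat p * e"
    using assms(1) by (rule rat_congE)
  moreover obtain f where "p_integral p c" "p_integral p d" "p_integral p f" "c - d = of_nat p * f"
    using assms(2) by (rule rat_congE)
  ultimately show ?thesis
    by (intro rat_congI[where c="e + f"] p_integral_add) (simp_all add: algebra_simps)
qed

lemma rat_cong_mult:
  assumes "rat_cong a b p" and "rat_cong c d p"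
  shows "rat_cong (a * c) (b * d) p"
proof -
  obtain e where "p_integral p a" "p_integral p b" "p_integral p e" and e: "a - b = of_nat p * e"
    using assms(1) by (rule rat_congE)
  moreover obtain f where "p_integral p c" "p_integral p d" "p_integral p f" and f: "c - d = of_nat p * f"
    using assms(2) by (rule rat_congE)
  moreover have "a * c - b * d = of_nat p * (e * c + b * f)"
    using e f by (simp add: algebra_simps flip: right_diff_distrib)
  ultimately show ?thesis
    by (intro rat_congI[where c="e * c + b * f"] p_integral_add p_integral_mult) simp_all
qed

lemma rat_cong_minus: "rat_cong a b p \<Longrightarrow> rat_cong (- a) (- b) p"
  using rat_cong_mult[OF rat_cong_refl[OF p_integral_of_int[of p "-1"]]] by simp

lemma rat_cong_sum:
  "(\<And>i. i \<in> A \<Longrightarrow> rat_cong (f i) (g i) p) \<Longrightarrow> rat_cong (sum f A) (sum g A) p"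
  by (induction A rule: infinite_finite_induct) (auto intro: rat_cong_refl rat_cong_add)

lemma rat_cong_power: "rat_cong a b p \<Longrightarrow> rat_cong (a ^ n) (b ^ n) p"
  by (induction n) (auto intro: rat_cong_refl rat_cong_mult)

lemma rat_cong_div_neg_inverse:
  assumes "prime p" and "p dvd a * j + k" and "\<not> p dvd k" and "\<not> p dvd j"
  shows "rat_cong (of_nat a / of_nat k) (- 1 / of_nat j) p"
proof -
  obtain r where r: "a * j + k = p * r" using assms(2) by (auto elim: dvdE)
  have "k \<noteq> 0" using assms(3) by (rule contrapos_nn) simp
  have "j \<noteq> 0" using assms(4) by (rule contrapos_nn) simp
  have "\<not> p dvd k * j" using assms by (simp add: prime_dvd_mult_iff)
  show ?thesis
  proof (rule rat_congI)
    have "of_nat a / of_nat k - (- 1 / of_nat j) = (of_nat (a * j + k) / of_nat (k * j) :: rat)"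
      using \<open>k \<noteq> 0\<close> \<open>j \<noteq> 0\<close> by (simp add: field_simps)
    also have "\<dots> = of_nat p * (of_nat r / of_nat (k * j))" by (simp add: r)
    finally show "of_nat a / of_nat k - (- 1 / of_nat j) = of_nat p * (of_nat r / of_nat (k * j) :: rat)" .
    show "p_integral p (of_nat r / of_nat (k * j))"
      using assms(1) \<open>\<not> p dvd k * j\<close> p_integral_of_nat by (rule p_integral_divide_of_nat)
    show "p_integral p (of_nat a / of_nat k)"
      using assms(1,3) p_integral_of_nat by (rule p_integral_divide_of_nat)
    show "p_integral p (- 1 / of_nat j)"
      using p_integral_minus[OF p_integral_inverse_of_nat[OF assms(1,4)]] by simp
  qed
qed

declare bernoulli_num.simps [simp del]

lemma bernoulli_num_0 [simp]: "bernoulli_num 0 = 1"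
  by (simp add: bernoulli_num.simps)

lemma bernoulli_num_eq:
  "n > 0 \<Longrightarrow>
     bernoulli_num n = - (\<Sum>k<n. of_nat (Suc n choose k) * bernoulli_num k) / of_nat (Suc n)"
proof -
  have "(\<Sum>k<n. of_nat (Suc n choose k) * (if k < n then bernoulli_num k else 0))
      = (\<Sum>k<n. of_nat (Suc n choose k) * bernoulli_num k)"
    by (rule sum.cong) auto
  moreover assume "n > 0"
  ultimately show ?thesis by (subst bernoulli_num.simps) simp
qed

lemma bernoulli_num_sum_eq_0:
  assumes "n \<ge> 2"
  shows "(\<Sum>k<n. of_nat (n choose k) * bernoulli_num k) = 0"
proof -
  obtain n' where n: "n = Suc n'" "n' > 0" using assms by (cases n) auto
  have "(\<Sum>k<n. of_nat (n choose k) * bernoulli_num k)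
     = (\<Sum>k<n'. of_nat (Suc n' choose k) * bernoulli_num k) + of_nat (Suc n') * bernoulli_num n'"
    using n by simp
  also have "\<dots> = 0" using bernoulli_num_eq[OF n(2)] by (simp add: field_simps del: of_nat_Suc)
  finally show ?thesis .
qed

lemma p_integral_bernoulli_num:
  assumes "prime p" and "k + 1 < p"
  shows "p_integral p (bernoulli_num k)"
  using assms(2)
proof (induction k rule: less_induct)
  case (less k)
  show ?case
  proof (cases "k = 0")
    case False
    have "\<not> p dvd Suc k" using less.prems by (simp add: nat_dvd_not_less)
    moreover have "p_integral p (- (\<Sum>i<k. of_nat (Suc k choose i) * bernoulli_num i))"
      using less assms(1) by (auto intro!: p_integral_minus p_integral_sum p_integral_mult)
    ultimately have "p_integral p
        (- (\<Sum>i<k. of_nat (Suc k choose i) * bernoulli_num i) / of_nat (Suc k))"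
      using assms(1) by (intro p_integral_divide_of_nat)
    moreover have "k > 0" using False by simp
    ultimately show ?thesis by (simp only: bernoulli_num_eq)
  qed simp
qed

lemma bernoulli_poly_altdef:
  "bernoulli_poly n x = (\<Sum>k\<le>n. of_nat (n choose k) * bernoulli_num (n - k) * x ^ k)"
  unfolding bernoulli_poly_def
  by (rule sum.reindex_bij_witness[where i="\<lambda>k. n - k" and j="\<lambda>k. n - k"])
     (auto simp: binomial_symmetric[symmetric])

lemma bernoulli_poly_0 [simp]: "bernoulli_poly n 0 = bernoulli_num n"
  unfolding bernoulli_poly_altdef by (simp add: zero_power)

lemma bernoulli_poly_1: "bernoulli_poly n 1 = bernoulli_num n + (if n = 1 then 1 else 0)"
proof -
  have "bernoulli_poly n 1 = (\<Sum>k<n. of_nat (n choose k) * bernoulli_num k) + bernoulli_num n"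
    unfolding bernoulli_poly_def by (simp add: lessThan_Suc_atMost[symmetric])
  moreover have "(\<Sum>k<n. of_nat (n choose k) * bernoulli_num k) = (if n = 1 then 1 else 0)"
  proof (cases "n \<ge> 2")
    case False
    then have "n = 0 \<or> n = 1" by auto
    then show ?thesis by auto
  qed (simp add: bernoulli_num_sum_eq_0)
  ultimately show ?thesis by simp
qed

lemma bernoulli_poly_minus_bernoulli_num:
  "bernoulli_poly n x - bernoulli_num n = (\<Sum>k<n. of_nat (n choose k) * bernoulli_num k * x ^ (n - k))"
  unfolding bernoulli_poly_def by (simp add: lessThan_Suc_atMost[symmetric])

lemma bernoulli_poly_add_inner_sum:
  assumes "i \<le> n"
  shows "(\<Sum>k\<le>n. of_nat (n choose k) * of_nat (k choose i) * bernoulli_num (n - k) * y ^ (k - i))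
     = of_nat (n choose i) * bernoulli_poly (n - i) y"
proof -
  have "(\<Sum>k\<le>n. of_nat (n choose k) * of_nat (k choose i) * bernoulli_num (n - k) * y ^ (k - i))
     = (\<Sum>k\<in>{i..n}. of_nat (n choose k) * of_nat (k choose i) * bernoulli_num (n - k) * y ^ (k - i))"
    by (rule sum.mono_neutral_right) auto
  also have "\<dots> = (\<Sum>k\<in>{i..n}. of_nat (n choose i) *
      (of_nat ((n - i) choose (k - i)) * bernoulli_num ((n - i) - (k - i)) * y ^ (k - i)))"
  proof (rule sum.cong)
    fix k assume k: "k \<in> {i..n}"
    then have "(n choose k) * (k choose i) = (n choose i) * ((n - i) choose (k - i))"
      using choose_mult[of i k n] by auto
    then have "(of_nat (n choose k) * of_nat (k choose i) :: rat)
        = of_nat (n choose i) * of_nat ((n - i) choose (k - i))"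
      by (metis of_nat_mult)
    moreover have "n - k = (n - i) - (k - i)" using k by auto
    ultimately show "of_nat (n choose k) * of_nat (k choose i) * bernoulli_num (n - k) * y ^ (k - i)
       = of_nat (n choose i) * (of_nat ((n - i) choose (k - i)) * bernoulli_num ((n - i) - (k - i)) * y ^ (k - i))"
      by (simp add: mult.assoc)
  qed simp
  also have "\<dots> = of_nat (n choose i) *
      (\<Sum>l\<le>n - i. of_nat ((n - i) choose l) * bernoulli_num ((n - i) - l) * y ^ l)"
    unfolding sum_distrib_left
    by (rule sum.reindex_bij_witness[where i="\<lambda>l. l + i" and j="\<lambda>k. k - i"]) (use assms in auto)
  finally show ?thesis unfolding bernoulli_poly_altdef .
qed

lemma bernoulli_poly_add:
  "bernoulli_poly n (x + y) = (\<Sum>i\<le>n. of_nat (n choose i) * bernoulli_poly (n - i) y * x ^ i)"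
proof -
  have binomial: "(x + y) ^ k = (\<Sum>i\<le>n. of_nat (k choose i) * x ^ i * y ^ (k - i))" if "k \<le> n" for k
    unfolding binomial_ring by (rule sum.mono_neutral_left) (use that in auto)
  have "bernoulli_poly n (x + y) = (\<Sum>k\<le>n. of_nat (n choose k) * bernoulli_num (n - k) *
      (\<Sum>i\<le>n. of_nat (k choose i) * x ^ i * y ^ (k - i)))"
    unfolding bernoulli_poly_altdef by (intro sum.cong) (auto simp: binomial)
  also have "\<dots> = (\<Sum>i\<le>n. x ^ i *
      (\<Sum>k\<le>n. of_nat (n choose k) * of_nat (k choose i) * bernoulli_num (n - k) * y ^ (k - i)))"
    unfolding sum_distrib_left sum_distrib_right
    by (subst sum.swap) (auto intro!: sum.cong simp: ac_simps)
  also have "\<dots> = (\<Sum>i\<le>n. of_nat (n choose i) * bernoulli_poly (n - i) y * x ^ i)"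
    by (intro sum.cong) (auto simp: bernoulli_poly_add_inner_sum)
  finally show ?thesis .
qed

lemma bernoulli_poly_succ_diff:
  assumes "n > 0"
  shows "bernoulli_poly n (x + 1) - bernoulli_poly n x = of_nat n * x ^ (n - 1)"
proof -
  have "bernoulli_poly n (x + 1) - bernoulli_poly n (x + 0) = (\<Sum>i\<le>n.
      of_nat (n choose i) * (bernoulli_poly (n - i) 1 - bernoulli_poly (n - i) 0) * x ^ i)"
    unfolding bernoulli_poly_add sum_subtractf[symmetric] by (intro sum.cong) (auto simp: algebra_simps)
  also have "\<dots> = (\<Sum>i\<le>n. if i = n - 1 then of_nat n * x ^ (n - 1) else 0)"
    using assms binomial_symmetric[of 1 n] by (intro sum.cong) (auto simp: bernoulli_poly_1)
  also have "\<dots> = of_nat n * x ^ (n - 1)" using assms by simp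
  finally show ?thesis by simp
qed

lemma bernoulli_poly_minus_of_nat:
  assumes "n > 0"
  shows "bernoulli_poly n (- of_nat a) - bernoulli_num n = - of_nat n * (\<Sum>i=1..a. (- of_nat i) ^ (n - 1))"
proof (induction a)
  case (Suc a)
  have "bernoulli_poly n (- of_nat (Suc a) + 1) - bernoulli_poly n (- of_nat (Suc a))
      = of_nat n * (- of_nat (Suc a)) ^ (n - 1)"
    using assms by (rule bernoulli_poly_succ_diff)
  then show ?case using Suc.IH by (simp add: algebra_simps)
qed simp

(* The constant term is subtracted because B_(p-1) itself has p in its denominator. *)
lemma bernoulli_poly_cong:
  assumes "prime p" and "n < p" and "rat_cong x y p"
  shows "rat_cong (bernoulli_poly n x - bernoulli_num n) (bernoulli_poly n y - bernoulli_num n) p"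
  unfolding bernoulli_poly_minus_bernoulli_num using assms
  by (intro rat_cong_sum rat_cong_mult rat_cong_refl rat_cong_power p_integral_mult
      p_integral_of_nat p_integral_bernoulli_num) auto

lemma rat_cong_power_p_minus_2:
  assumes "prime p" and "2 < p"
  shows "rat_cong (of_nat i ^ (p - 2)) (if p dvd i then 0 else 1 / of_nat i) p"
proof (cases "p dvd i")
  case True
  then obtain q where i: "i = p * q" by (auto elim: dvdE)
  have "p - 2 = Suc (p - 3)" using assms(2) by simp
  then have "(of_nat i ^ (p - 2) :: rat) - 0 = of_nat p * (of_nat q * of_nat i ^ (p - 3))"
    using i by simp
  with True show ?thesis
    by (intro rat_congI[where c="of_nat q * of_nat i ^ (p - 3)"])
       (simp_all add: p_integral_mult p_integral_power)
next
  case False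
  have "[int i ^ (p - 1) = 1] (mod int p)"
    using fermat_theorem[OF assms(1) False] cong_int_iff[of "i ^ (p - 1)" 1 p] by simp
  then obtain w where w: "int i ^ (p - 1) - 1 = int p * w"
    by (auto simp: cong_iff_dvd_diff elim: dvdE)
  have "i \<noteq> 0" using False by (rule contrapos_nn) simp
  have "p - 1 = Suc (p - 2)" using assms(2) by simp
  have "(of_nat i ^ (p - 1) - 1 :: rat) = of_nat p * of_int w"
    using arg_cong[OF w, of "of_int :: int \<Rightarrow> rat"] by simp
  then have "(of_nat i ^ (p - 2) :: rat) - 1 / of_nat i = of_nat p * (of_int w / of_nat i)"
    using \<open>i \<noteq> 0\<close> \<open>p - 1 = Suc (p - 2)\<close> by (simp add: field_simps)
  with False assms(1) show ?thesis
    by (intro rat_congI[where c="of_int w / of_nat i"])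
       (simp_all add: p_integral_power p_integral_divide_of_nat p_integral_inverse_of_nat)
qed

lemma bernoulli_poly_minus_of_nat_cong:
  assumes "prime p" and "odd p"
  shows "rat_cong (bernoulli_poly (p - 1) (- of_nat N) - bernoulli_num (p - 1))
                  (- (\<Sum>j\<in>{j\<in>{1..N}. \<not> p dvd j}. 1 / of_nat j)) p"
proof -
  have "2 < p" using assms prime_ge_2_nat[OF assms(1)] by (cases "p = 2") auto
  then have "odd (p - 1 - 1)" using assms(2) by presburger
  define S where "S = (\<Sum>i=1..N. of_nat i ^ (p - 2) :: rat)"
  have "p_integral p S" unfolding S_def by (intro p_integral_sum p_integral_power p_integral_of_nat)
  have "bernoulli_poly (p - 1) (- of_nat N) - bernoulli_num (p - 1) = of_nat (p - 1) * S"
    using bernoulli_poly_minus_of_nat[of "p - 1" N] \<open>2 < p\<close> \<open>odd (p - 1 - 1)\<close>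
    unfolding S_def by (simp add: sum_negf numeral_2_eq_2) (simp add: algebra_simps)
  moreover have "rat_cong (of_nat (p - 1) * S) (- S) p"
    using \<open>p_integral p S\<close> \<open>2 < p\<close>
    by (intro rat_congI[where c=S] p_integral_mult p_integral_minus p_integral_of_nat)
       (simp_all add: of_nat_diff algebra_simps)
  moreover have "rat_cong (- S) (- (\<Sum>i=1..N. if p dvd i then 0 else 1 / of_nat i)) p"
    unfolding S_def using assms(1) \<open>2 < p\<close>
    by (intro rat_cong_minus rat_cong_sum rat_cong_power_p_minus_2)
  moreover have "(\<Sum>i=1..N. if p dvd i then 0 else 1 / of_nat i)
      = (\<Sum>j\<in>{j\<in>{1..N}. \<not> p dvd j}. 1 / (of_nat j :: rat))"
    unfolding sum.inter_filter[OF finite_atLeastAtMost] by (rule sum.cong) auto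
  ultimately show ?thesis by (metis rat_cong_trans)
qed

lemma K_reflection:
  assumes "prime p"
  shows "rat_cong (K p r m) (- K p (1 - r) m) p"
proof -
  define T where "T s = {k \<in> {1..p - 1}. int m dvd int k - s * int p}" for s
  have flip: "int p - int k - s * int p = - (int k - (1 - s) * int p)" for k s
    by (simp add: algebra_simps)
  have "K p (1 - r) m = (\<Sum>k\<in>T r. 1 / of_nat (p - k))"
    unfolding K_def T_def
    by (rule sum.reindex_bij_witness[where i="\<lambda>k. p - k" and j="\<lambda>k. p - k"])
       (auto simp: flip dvd_minus_iff)
  then have "- K p (1 - r) m = (\<Sum>k\<in>T r. - 1 / of_nat (p - k))"
    by (simp add: sum_negf)
  moreover have "K p r m = (\<Sum>k\<in>T r. 1 / of_nat k)" by (simp add: K_def T_def)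
  moreover have "rat_cong (1 / of_nat k) (- 1 / of_nat (p - k)) p" if "k \<in> T r" for k
    using rat_cong_div_neg_inverse[OF assms, of 1 "p - k" k] that
    by (auto simp: T_def nat_dvd_not_less)
  ultimately show ?thesis by (simp only:) (rule rat_cong_sum)
qed

lemma add_eq_mult_iff_div_mod:
  fixes t k r p :: nat
  assumes "0 < k" and "k < p"
  shows "t + k = r * p \<longleftrightarrow> r = t div p + 1 \<and> k = p - t mod p"
proof
  assume tk: "t + k = r * p"
  then obtain r' where r: "r = Suc r'" using assms(1) by (cases r) auto
  with tk have tk': "t + k = p + r' * p" by simp
  then have "t div p = r'" using assms by (intro div_nat_eqI) (simp_all add: mult.commute)
  moreover have "t div p * p + t mod p = t" by (rule div_mult_mod_eq)
  ultimately show "r = t div p + 1 \<and> k = p - t mod p" using tk' r by auto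
next
  assume rk: "r = t div p + 1 \<and> k = p - t mod p"
  have "t div p * p + t mod p = t" by (rule div_mult_mod_eq)
  moreover have "t mod p < p" using assms(2) by simp
  moreover have "r * p = t div p * p + p" using rk by simp
  ultimately show "t + k = r * p" using rk by linarith
qed

definition K_pairs :: "nat \<Rightarrow> nat \<Rightarrow> nat \<Rightarrow> (nat \<times> nat) set" where
  "K_pairs p m n = (SIGMA r:{1..n}. {k \<in> {1..p - 1}. int m dvd int k - int r * int p})"

lemma sum_K_eq_sum_K_pairs: "(\<Sum>r=1..n. K p (int r) m) = (\<Sum>(r, k)\<in>K_pairs p m n. 1 / of_nat k)"
  unfolding K_def K_pairs_def by (subst sum.Sigma) auto

lemma K_pair_to_index:
  assumes "m > 0" and "(r, k) \<in> K_pairs p m n"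
  defines "j \<equiv> (r * p - k) div m"
  shows "j \<in> {1..p * n div m} \<and> \<not> p dvd j \<and> (m * j div p + 1, p - m * j mod p) = (r, k)"
proof -
  from assms(2) have r: "1 \<le> r" "r \<le> n" and k: "0 < k" "k < p"
    and dvd: "int m dvd int k - int r * int p"
    unfolding K_pairs_def by auto
  define t where "t = r * p - k"
  have "p \<le> r * p" using r by simp
  then have tk: "t + k = r * p" using k unfolding t_def by linarith
  then have "int t + int k = int r * int p" using arg_cong[OF tk, of int] by simp
  then have "int k - int r * int p = - int t" by linarith
  then have "m dvd t" using dvd by simp
  then have mj: "m * j = t" unfolding j_def t_def[symmetric] by simp
  have rk: "t div p + 1 = r" "p - t mod p = k"
    using add_eq_mult_iff_div_mod[OF k] tk by auto
  then have "\<not> p dvd t" using \<open>k < p\<close> by auto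
  then have "\<not> p dvd j" using mj by (metis dvd_mult)
  moreover have "t \<noteq> 0" using \<open>\<not> p dvd t\<close> by (rule contrapos_nn) simp
  then have "j \<noteq> 0" using mj by auto
  moreover have "r * p \<le> n * p" using r by simp
  then have "t \<le> n * p" using tk by linarith
  then have "t \<le> p * n" by (simp add: mult.commute)
  then have "j \<le> p * n div m" unfolding j_def t_def[symmetric] by (rule div_le_mono)
  ultimately show ?thesis using mj rk by simp
qed

lemma K_index_to_pair:
  assumes "prime p" and "\<not> p dvd m" and j: "1 \<le> j" "j \<le> p * n div m" "\<not> p dvd j"
  defines "r \<equiv> m * j div p + 1" and "k \<equiv> p - m * j mod p"
  shows "(r, k) \<in> K_pairs p m n \<and> (r * p - k) div m = j"
proof -
  have "m > 0" using j(1,2) by (cases "m = 0") simp_all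
  have "\<not> p dvd m * j" using assms(1,2) j(3) by (simp add: prime_dvd_mult_iff)
  then have "m * j mod p \<noteq> 0" by (simp add: dvd_eq_mod_eq_0)
  moreover have "m * j mod p < p" using prime_gt_0_nat[OF assms(1)] by simp
  ultimately have k: "0 < k" "k < p" unfolding k_def by auto
  then have tk: "m * j + k = r * p" unfolding r_def k_def using add_eq_mult_iff_div_mod by blast
  have "m * j \<le> p * n" using j(2) \<open>m > 0\<close>
    by (metis div_times_less_eq_dividend le_trans mult.commute mult_le_mono2)
  moreover have "m * j \<noteq> p * n" using \<open>\<not> p dvd m * j\<close> by auto
  ultimately have "m * j div p < n"
    using prime_gt_0_nat[OF assms(1)] by (simp add: div_less_iff_less_mult mult.commute)
  moreover have "int k - int r * int p = - int (m * j)" using arg_cong[OF tk, of int] by simp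
  moreover have "r * p - k = m * j" using tk by simp
  ultimately show ?thesis using k \<open>m > 0\<close> unfolding r_def K_pairs_def by simp
qed

lemma sum_K_eq_sum_over_indices:
  assumes "m > 0" and "prime p" and "\<not> p dvd m"
  shows "(\<Sum>r=1..n. K p (int r) m) = (\<Sum>j\<in>{j\<in>{1..p * n div m}. \<not> p dvd j}. 1 / of_nat (p - m * j mod p))"
  unfolding sum_K_eq_sum_K_pairs
proof (rule sum.reindex_bij_witness[where j="\<lambda>(r, k). (r * p - k) div m"
      and i="\<lambda>j. (m * j div p + 1, p - m * j mod p)"], goal_cases)
  case (3 j)
  then show ?case using K_index_to_pair[OF assms(2,3), of j] by auto
next
  case (4 j)
  then show ?case using K_index_to_pair[OF assms(2,3), of j] by auto
qed (auto simp: split_paired_all dest: K_pair_to_index[OF assms(1)])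

lemma sum_K_cong_harmonic:
  assumes "m > 0" and "prime p" and "\<not> p dvd m"
  shows "rat_cong (of_nat m * (\<Sum>r=1..n. K p (int r) m))
                  (- (\<Sum>j\<in>{j\<in>{1..p * n div m}. \<not> p dvd j}. 1 / of_nat j)) p"
proof -
  have cong: "rat_cong (of_nat m / of_nat (p - m * j mod p)) (- 1 / of_nat j) p"
    if "\<not> p dvd j" for j
  proof (rule rat_cong_div_neg_inverse[OF assms(2)])
    have "\<not> p dvd m * j" using assms(2,3) that by (simp add: prime_dvd_mult_iff)
    then have "m * j mod p \<noteq> 0" by (simp add: dvd_eq_mod_eq_0)
    moreover have "m * j mod p < p" using prime_gt_0_nat[OF assms(2)] by simp
    ultimately have k: "0 < p - m * j mod p" "p - m * j mod p < p" by auto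
    then show "\<not> p dvd p - m * j mod p" by (auto simp: nat_dvd_not_less)
    have "m * j + (p - m * j mod p) = (m * j div p + 1) * p"
      using add_eq_mult_iff_div_mod[OF k] by blast
    then show "p dvd m * j + (p - m * j mod p)" by simp
  qed fact
  show ?thesis
    unfolding sum_K_eq_sum_over_indices[OF assms] sum_distrib_left sum_negf[symmetric]
    by (rule rat_cong_sum) (use cong in simp)
qed

theorem corollary2p1:
  fixes m n p :: nat
  assumes "m > 0" and "n > 0" and "prime p" and "odd p" and "\<not> p dvd m"
  shows "rat_cong (bernoulli_poly (p - 1) (frac (of_nat (p * n) / of_nat m)) - bernoulli_num (p - 1))
                  (of_nat m * (\<Sum>r=1..n. K p (int r) m)) p
       \<and> rat_cong (of_nat m * (\<Sum>r=1..n. K p (int r) m))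
                  (- (\<Sum>k\<in>{k\<in>{1..nat \<lfloor>of_nat (p * n) / (of_nat m :: rat)\<rfloor>}. \<not> p dvd k}. 1 / of_nat k)) p
       \<and> (\<forall>r::int. rat_cong (K p r m) (- K p (1 - r) m) p)"
proof -
  define N where "N = p * n div m"
  have floor: "\<lfloor>of_nat (p * n) / (of_nat m :: rat)\<rfloor> = int N"
    unfolding N_def by (rule floor_divide_of_nat_eq)
  have "p_integral p (of_nat n / of_nat m)"
    using assms(3,5) p_integral_of_nat by (rule p_integral_divide_of_nat)
  then have "rat_cong (of_nat p * (of_nat n / of_nat m) - of_nat N) (- of_nat N) p"
    by (intro rat_congI[where c="of_nat n / of_nat m"] p_integral_diff p_integral_minus
        p_integral_mult p_integral_of_nat) simp_all
  moreover have "frac (of_nat (p * n) / of_nat m) = of_nat p * (of_nat n / of_nat m) - (of_nat N :: rat)"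
    unfolding frac_def floor by simp
  ultimately have "rat_cong (frac (of_nat (p * n) / of_nat m)) (- of_nat N) p" by simp
  then have "rat_cong (bernoulli_poly (p - 1) (frac (of_nat (p * n) / of_nat m)) - bernoulli_num (p - 1))
                      (bernoulli_poly (p - 1) (- of_nat N) - bernoulli_num (p - 1)) p"
    using assms(3) prime_gt_0_nat[OF assms(3)] by (intro bernoulli_poly_cong) simp_all
  moreover note bernoulli_poly_minus_of_nat_cong[OF assms(3,4), of N]
  moreover have "rat_cong (of_nat m * (\<Sum>r=1..n. K p (int r) m))
                          (- (\<Sum>j\<in>{j\<in>{1..N}. \<not> p dvd j}. 1 / of_nat j)) p"
    unfolding N_def using assms(1,3,5) by (rule sum_K_cong_harmonic)
  ultimately show ?thesis
    unfolding floor nat_int using K_reflection[OF assms(3)] by (meson rat_cong_sym rat_cong_trans)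
qed

end
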